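(* Let $n\ge 4$ and let $D_n$ be the tree obtained from the path on $n-1$ vertices by adding a pendant edge at the second vertex of the path. Then the number of main eigenvalues of $D_n$ is $n-1$ if $4\nmid n$, and $n-2$ if $4\mid n$.
   Context: An eigenvalue of a graph with adjacency matrix $A$ is called main if $A$ has an eigenvector for it that is not orthogonal to the all-ones vector. *)

theory Defs
  imports "Jordan_Normal_Form.Char_Poly"
begin

definition main_eigenvalue :: "real mat \<Rightarrow> real \<Rightarrow> bool" where
  "main_eigenvalue A k = (\<exists>v. eigenvector A v k \<and> v \<bullet> vec (dim_row A) (\<lambda>_. 1) \<noteq> 0)"

text \<open>Vertices 0..n-1. Vertices 0,...,n-2 form the path on n-1 vertices
  (edges i -- i+1); vertex n-1 is a pendant vertex attached to vertex 1,
  the second vertex of the path.\<close>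
definition D_adj :: "nat \<Rightarrow> nat \<Rightarrow> nat \<Rightarrow> bool" where
  "D_adj n i j = ((i < n - 1 \<and> j < n - 1 \<and> (i = j + 1 \<or> j = i + 1))
                  \<or> (i = n - 1 \<and> j = 1) \<or> (i = 1 \<and> j = n - 1))"

definition D_mat :: "nat \<Rightarrow> real mat" where
  "D_mat n = mat n n (\<lambda>(i, j). if D_adj n i j then 1 else 0)"

end

theory Submission
  imports Defs
begin

(* Write n = m + 4. On the path 2, ..., m + 2 an eigenvector g for the eigenvalue k is
   determined by t = g (m + 2) through the Chebyshev recursion: g (m + 2 - j) = U_j(k) t.
   The two leaves 0 and m + 3 at the branch vertex 1 then leave a single condition. For
   k \<noteq> 0 it says U_(m+3)(k) = U_(m+1)(k), i.e. C_(m+3)(k) = 0 where C_p(2 cos s) = 2 cos (p s);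
   its p = m + 3 = n - 1 zeros 2 cos ((2j + 1) pi / (2p)) are all main, since the Cassini
   identity rules out a vanishing coordinate sum. For k = 0 a main eigenvector exists exactly
   when m mod 4 = 2, whereas 0 is a zero of C_(m+3) exactly when m is even; so one zero is
   lost exactly when 4 divides n. *)

(* cheb_U m k = U_m(k/2) and poly (cheb_C m) k = 2 T_m(k/2) for the Chebyshev polynomials
   T_m, U_m; with this scaling both satisfy the path recursion x_(m+2) = k x_(m+1) - x_m. *)
fun cheb_U :: "nat \<Rightarrow> real \<Rightarrow> real" where
  "cheb_U 0 k = 1"
| "cheb_U (Suc 0) k = k"
| "cheb_U (Suc (Suc m)) k = k * cheb_U (Suc m) k - cheb_U m k"

fun cheb_C :: "nat \<Rightarrow> real poly" where
  "cheb_C 0 = [:2:]"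
| "cheb_C (Suc 0) = [:0, 1:]"
| "cheb_C (Suc (Suc m)) = [:0, 1:] * cheb_C (Suc m) - cheb_C m"

lemma cheb_U_sum: "(k - 2) * (\<Sum>j<Suc m. cheb_U j k) = cheb_U (Suc m) k - cheb_U m k - 1"
  by (induction m) (simp_all add: algebra_simps)

lemma cheb_U_cassini: "(cheb_U (Suc m) k)\<^sup>2 - cheb_U (Suc (Suc m)) k * cheb_U m k = 1"
  by (induction m) (simp_all add: power2_eq_square algebra_simps)

lemma cheb_U_at_0: "cheb_U m 0 = (if odd m then 0 else if 4 dvd m then 1 else -1)"
proof (induction m rule: induct_nat_012)
  case (ge2 m)
  then show ?case by auto presburger+
qed simp_all

lemma cheb_U_diff: "cheb_U (Suc (Suc m)) k - cheb_U m k = poly (cheb_C (Suc (Suc m))) k"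
proof (induction m rule: induct_nat_012)
  case (ge2 m)
  have "cheb_U (Suc (Suc (Suc (Suc m)))) k - cheb_U (Suc (Suc m)) k
      = k * (cheb_U (Suc (Suc (Suc m))) k - cheb_U (Suc m) k) - (cheb_U (Suc (Suc m)) k - cheb_U m k)"
    by (simp add: algebra_simps)
  also have "\<dots> = poly (cheb_C (Suc (Suc (Suc (Suc m))))) k"
    by (simp only: ge2.IH) simp
  finally show ?case .
qed (simp_all add: algebra_simps)

lemma poly_cheb_C_cos: "poly (cheb_C m) (2 * cos t) = 2 * cos (real m * t)"
proof (induction m rule: induct_nat_012)
  case (ge2 m)
  have "cos (real (Suc (Suc m)) * t) + cos (real m * t) = 2 * cos t * cos (real (Suc m) * t)"
    using cos_add[of "real (Suc m) * t" t] cos_diff[of "real (Suc m) * t" t]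
    by (simp add: algebra_simps)
  with ge2 show ?case by (simp add: algebra_simps)
qed simp_all

lemma cheb_C_monic: "0 < m \<Longrightarrow> degree (cheb_C m) \<le> m \<and> coeff (cheb_C m) m = 1"
proof (induction m rule: induct_nat_012)
  case (ge2 m)
  have "degree (cheb_C m) \<le> m"
    using ge2 by (cases m) auto
  then have "coeff (cheb_C m) (Suc (Suc m)) = 0"
    by (intro coeff_eq_0) simp
  moreover have "degree (pCons 0 (cheb_C (Suc m))) \<le> Suc (Suc m)"
    using ge2 by (metis Suc_le_mono degree_pCons_le le_trans zero_less_Suc)
  ultimately show ?case
    using ge2 \<open>degree (cheb_C m) \<le> m\<close> by (auto intro: degree_diff_le)
qed simp_all

lemma card_cheb_C_roots:
  assumes "0 < p"
  shows "card {k. poly (cheb_C p) k = 0} = p"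
proof -
  define \<theta> where "\<theta> j = real (2 * j + 1) * pi / real (2 * p)" for j
  have \<theta>_range: "0 \<le> \<theta> j \<and> \<theta> j \<le> pi" if "j < p" for j
  proof -
    have "real (2 * j + 1) / real (2 * p) \<le> 1"
      using that by simp
    from mult_right_mono[OF this pi_ge_zero] show ?thesis
      by (simp add: \<theta>_def)
  qed
  have roots: "2 * cos (\<theta> j) \<in> {k. poly (cheb_C p) k = 0}" for j
  proof -
    have "real p * \<theta> j = real (2 * j + 1) * (pi / 2)"
      using assms by (simp add: \<theta>_def)
    then have "cos (real p * \<theta> j) = 0"
      unfolding cos_zero_iff_int by (intro exI[of _ "int (2 * j + 1)"]) simp
    then show ?thesis
      by (simp add: poly_cheb_C_cos)
  qed
  have "inj_on (\<lambda>j. 2 * cos (\<theta> j)) {..<p}"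
  proof (rule inj_onI)
    fix i j
    assume "i \<in> {..<p}" "j \<in> {..<p}" and "2 * cos (\<theta> i) = 2 * cos (\<theta> j)"
    then have "\<theta> i = \<theta> j"
      using \<theta>_range[of i] \<theta>_range[of j] cos_inj_pi[of "\<theta> i" "\<theta> j"] by simp
    then have "real (2 * i + 1) * (pi / real (2 * p)) = real (2 * j + 1) * (pi / real (2 * p))"
      unfolding \<theta>_def times_divide_eq_right .
    then show "i = j"
      using assms by simp
  qed
  have nonzero: "cheb_C p \<noteq> 0"
    using cheb_C_monic[OF assms] by auto
  have "p = card ((\<lambda>j. 2 * cos (\<theta> j)) ` {..<p})"
    using \<open>inj_on _ _\<close> by (simp add: card_image)
  also have "\<dots> \<le> card {k. poly (cheb_C p) k = 0}"
    using roots poly_roots_finite[OF nonzero] by (intro card_mono) auto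
  finally have "p \<le> card {k. poly (cheb_C p) k = 0}" .
  moreover have "card {k. poly (cheb_C p) k = 0} \<le> p"
    using card_poly_roots_bound[OF nonzero] cheb_C_monic[OF assms] by linarith
  ultimately show ?thesis
    by simp
qed

lemma poly_cheb_C_0_eq_0_iff: "poly (cheb_C p) 0 = 0 \<longleftrightarrow> odd p"
  by (induction p rule: induct_nat_012) simp_all

(* For a nonzero root k the normalised eigenvector of main_eigenvalue_D_iff below, with
   leaf values cheb_U (m + 1) k / k, has nonzero coordinate sum. *)
lemma cheb_U_sum_nonzero:
  assumes "k \<noteq> 0" and root: "cheb_U (m + 3) k = cheb_U (m + 1) k"
  shows "2 * cheb_U (m + 1) k + k * (\<Sum>j<m + 2. cheb_U j k) \<noteq> 0"
proof
  define a b c S where "a = cheb_U (m + 1) k" and "b = cheb_U (m + 2) k" and "c = cheb_U m k"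
    and "S = (\<Sum>j<m + 2. cheb_U j k)"
  assume "2 * cheb_U (m + 1) k + k * (\<Sum>j<m + 2. cheb_U j k) = 0"
  then have kS: "k * S = - 2 * a"
    by (simp add: a_def S_def)
  have c: "c = k * a - b" and kb: "k * b = 2 * a"
    using root by (simp_all add: a_def b_def c_def numeral_3_eq_3)
  have sum: "(k - 2) * S = b - a - 1" and cassini: "a\<^sup>2 - b * c = 1"
    using cheb_U_sum[of k "m + 1"] cheb_U_cassini[of m k]
    by (simp_all add: a_def b_def c_def S_def)
  have "(k - 2) * (k * S) = k * ((k - 2) * S)"
    by (rule mult.left_commute)
  also have "\<dots> = k * b - k * a - k"
    unfolding sum by (simp add: algebra_simps)
  finally have "(k - 2) * (k * S) = k * b - k * a - k" .
  then have ak: "a * (k - 2) = k"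
    unfolding kS kb by (simp add: algebra_simps)
  have "k\<^sup>2 * (a\<^sup>2 - b * c) = k\<^sup>2 * a\<^sup>2 - k * a * (k * (k * b)) + (k * b)\<^sup>2"
    unfolding c by (simp add: power2_eq_square algebra_simps)
  then have "a\<^sup>2 * (4 - k\<^sup>2) = k\<^sup>2"
    unfolding cassini kb by (simp add: power2_eq_square algebra_simps)
  also have "k\<^sup>2 = a\<^sup>2 * (k - 2)\<^sup>2"
    using arg_cong[OF ak, of "\<lambda>x. x\<^sup>2"] by (simp add: power_mult_distrib)
  finally have "a\<^sup>2 * (k - 2) * k = 0"
    by (simp add: power2_eq_square algebra_simps)
  then show False
    using ak \<open>k \<noteq> 0\<close> by auto
qed

lemma main_eigenvalue_iff:
  assumes A: "A \<in> carrier_mat n n"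
  shows "main_eigenvalue A k \<longleftrightarrow>
    (\<exists>g. (\<forall>i<n. (\<Sum>j<n. A $$ (i, j) * g j) = k * g i) \<and> (\<Sum>i<n. g i) \<noteq> 0)"
proof
  assume "main_eigenvalue A k"
  then obtain v where v: "v \<in> carrier_vec n" "A *\<^sub>v v = k \<cdot>\<^sub>v v"
    and sum: "v \<bullet> vec n (\<lambda>_. 1) \<noteq> 0"
    using A unfolding main_eigenvalue_def eigenvector_def by auto
  have "(\<Sum>j<n. A $$ (i, j) * v $ j) = k * v $ i" if "i < n" for i
  proof -
    have "(A *\<^sub>v v) $ i = k * v $ i"
      using v that by simp
    then show ?thesis
      using A v(1) that by (simp add: scalar_prod_def lessThan_atLeast0)
  qed
  moreover have "(\<Sum>i<n. v $ i) \<noteq> 0"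
    using sum by (simp add: scalar_prod_def lessThan_atLeast0)
  ultimately show "\<exists>g. (\<forall>i<n. (\<Sum>j<n. A $$ (i, j) * g j) = k * g i) \<and> (\<Sum>i<n. g i) \<noteq> 0"
    by blast
next
  assume "\<exists>g. (\<forall>i<n. (\<Sum>j<n. A $$ (i, j) * g j) = k * g i) \<and> (\<Sum>i<n. g i) \<noteq> 0"
  then obtain g where eqs: "\<And>i. i < n \<Longrightarrow> (\<Sum>j<n. A $$ (i, j) * g j) = k * g i"
    and sum: "(\<Sum>i<n. g i) \<noteq> 0"
    by blast
  have "\<exists>i<n. g i \<noteq> 0"
    using sum by (meson lessThan_iff sum.neutral)
  then have "vec n g \<noteq> 0\<^sub>v n"
    by (auto simp: vec_eq_iff)
  moreover have "A *\<^sub>v vec n g = k \<cdot>\<^sub>v vec n g"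
    using A eqs by (auto simp: scalar_prod_def lessThan_atLeast0)
  moreover have "vec n g \<bullet> vec n (\<lambda>_. 1) \<noteq> 0"
    using sum by (simp add: scalar_prod_def lessThan_atLeast0)
  ultimately have "eigenvector A (vec n g) k \<and> vec n g \<bullet> vec (dim_row A) (\<lambda>_. 1) \<noteq> 0"
    using A unfolding eigenvector_def by auto
  then show "main_eigenvalue A k"
    unfolding main_eigenvalue_def by blast
qed

lemma D_mat_carrier: "D_mat n \<in> carrier_mat n n"
  by (simp add: D_mat_def)

lemma D_mat_row_sum:
  assumes "i < m + 4"
  shows "(\<Sum>j<m + 4. D_mat (m + 4) $$ (i, j) * g j) =
    (if i = 0 \<or> i = m + 3 then g 1
     else if i = 1 then g 0 + g 2 + g (m + 3)
     else if i = m + 2 then g (m + 1)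
     else g (i - 1) + g (i + 1))"
proof -
  have neighbours: "{j \<in> {..<m + 4}. D_adj (m + 4) i j} =
    (if i = 0 \<or> i = m + 3 then {1}
     else if i = 1 then {0, 2, m + 3}
     else if i = m + 2 then {m + 1}
     else {i - 1, i + 1})"
    using assms unfolding D_adj_def by auto
  have "(\<Sum>j<m + 4. D_mat (m + 4) $$ (i, j) * g j) = (\<Sum>j<m + 4. if D_adj (m + 4) i j then g j else 0)"
    using assms by (intro sum.cong) (simp_all add: D_mat_def)
  also have "\<dots> = (\<Sum>j\<in>{j \<in> {..<m + 4}. D_adj (m + 4) i j}. g j)"
    by (rule sum.inter_filter[symmetric]) simp
  finally show ?thesis
    unfolding neighbours by auto
qed

definition D_eigen_eqs :: "nat \<Rightarrow> real \<Rightarrow> (nat \<Rightarrow> real) \<Rightarrow> bool" where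
  "D_eigen_eqs m k g \<longleftrightarrow>
     g 1 = k * g 0 \<and> g 1 = k * g (m + 3) \<and> g 0 + g 2 + g (m + 3) = k * g 1 \<and>
     (\<forall>i\<in>{2..m + 1}. g (i - 1) + g (i + 1) = k * g i) \<and> g (m + 1) = k * g (m + 2)"

lemma main_eigenvalue_D_iff_eqs:
  "main_eigenvalue (D_mat (m + 4)) k \<longleftrightarrow> (\<exists>g. D_eigen_eqs m k g \<and> (\<Sum>i<m + 4. g i) \<noteq> 0)"
proof -
  have "(\<forall>i<m + 4. (\<Sum>j<m + 4. D_mat (m + 4) $$ (i, j) * g j) = k * g i) \<longleftrightarrow> D_eigen_eqs m k g"
    for g
  proof
    assume rows: "\<forall>i<m + 4. (\<Sum>j<m + 4. D_mat (m + 4) $$ (i, j) * g j) = k * g i"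
    have "\<forall>i\<in>{2..m + 1}. g (i - 1) + g (i + 1) = k * g i"
    proof
      fix i
      assume "i \<in> {2..m + 1}"
      then show "g (i - 1) + g (i + 1) = k * g i"
        using rows[rule_format, of i] by (simp add: D_mat_row_sum)
    qed
    moreover have "g 1 = k * g 0" "g 1 = k * g (m + 3)" "g 0 + g 2 + g (m + 3) = k * g 1"
      "g (m + 1) = k * g (m + 2)"
      using rows[rule_format, of 0] rows[rule_format, of "m + 3"] rows[rule_format, of 1]
        rows[rule_format, of "m + 2"]
      by (simp_all add: D_mat_row_sum)
    ultimately show "D_eigen_eqs m k g"
      unfolding D_eigen_eqs_def by blast
  next
    assume "D_eigen_eqs m k g"
    then show "\<forall>i<m + 4. (\<Sum>j<m + 4. D_mat (m + 4) $$ (i, j) * g j) = k * g i"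
      unfolding D_eigen_eqs_def by (auto simp: D_mat_row_sum)
  qed
  then show ?thesis
    by (simp add: main_eigenvalue_iff[OF D_mat_carrier])
qed

lemma D_eigen_eqs_path:
  assumes eqs: "D_eigen_eqs m k g" and "j \<le> m + 1"
  shows "g (m + 2 - j) = cheb_U j k * g (m + 2)"
  using assms(2)
proof (induction j rule: induct_nat_012)
  case 1
  then show ?case
    using eqs unfolding D_eigen_eqs_def by simp
next
  case (ge2 j)
  have "m + 1 - j \<in> {2..m + 1}"
    using ge2.prems by auto
  with eqs have "g (m + 1 - j - 1) + g (m + 1 - j + 1) = k * g (m + 1 - j)"
    unfolding D_eigen_eqs_def by blast
  moreover have "m + 1 - j - 1 = m - j" "m + 1 - j + 1 = m + 2 - j"
    using ge2.prems by auto
  ultimately have "g (m - j) + g (m + 2 - j) = k * g (m + 1 - j)"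
    by simp
  then show ?case
    using ge2 by (simp add: algebra_simps)
qed simp

lemma sum_lessThan_split_ends:
  fixes g :: "nat \<Rightarrow> 'a::comm_monoid_add"
  shows "(\<Sum>i<m + 4. g i) = g 0 + g (m + 3) + (\<Sum>j<m + 2. g (m + 2 - j))"
proof -
  have "(\<Sum>i<m + 3. g i) = (\<Sum>j<m + 3. g (m + 2 - j))"
    using sum.nat_diff_reindex[of g "m + 3"] by simp
  then show ?thesis
    by (simp add: numeral_eq_Suc ac_simps)
qed

lemma D_eigen_eqs_sum:
  assumes "D_eigen_eqs m k g"
  shows "(\<Sum>i<m + 4. g i) = g 0 + g (m + 3) + g (m + 2) * (\<Sum>j<m + 2. cheb_U j k)"
  unfolding sum_lessThan_split_ends sum_distrib_left
  using D_eigen_eqs_path[OF assms] by (simp add: mult.commute)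

(* x and y are the leaf values of an eigenvector scaled to g (m + 2) = 1; the scaling is
   possible because g (m + 2) = 0 forces the coordinate sum to vanish. *)
lemma main_eigenvalue_D_iff:
  "main_eigenvalue (D_mat (m + 4)) k \<longleftrightarrow>
    (\<exists>x y. k * x = cheb_U (m + 1) k \<and> k * y = cheb_U (m + 1) k \<and>
      x + y + cheb_U m k = k * cheb_U (m + 1) k \<and> x + y + (\<Sum>j<m + 2. cheb_U j k) \<noteq> 0)"
  (is "_ \<longleftrightarrow> (\<exists>x y. ?leaf x \<and> ?leaf y \<and> ?branch x y \<and> ?sum x y)")
proof
  assume "main_eigenvalue (D_mat (m + 4)) k"
  then obtain g where eqs: "D_eigen_eqs m k g" and sum: "(\<Sum>i<m + 4. g i) \<noteq> 0"
    unfolding main_eigenvalue_D_iff_eqs by blast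
  define t where "t = g (m + 2)"
  define S where "S = (\<Sum>j<m + 2. cheb_U j k)"
  have g1: "g 1 = cheb_U (m + 1) k * t" and g2: "g 2 = cheb_U m k * t"
    using D_eigen_eqs_path[OF eqs, of "m + 1"] D_eigen_eqs_path[OF eqs, of m]
    by (simp_all add: t_def numeral_2_eq_2)
  have rows: "g 1 = k * g 0" "g 1 = k * g (m + 3)" "g 0 + g 2 + g (m + 3) = k * g 1"
    using eqs unfolding D_eigen_eqs_def by blast+
  have sum_eq: "(\<Sum>i<m + 4. g i) = g 0 + g (m + 3) + t * S"
    using D_eigen_eqs_sum[OF eqs] by (simp add: t_def S_def)
  have "t \<noteq> 0"
  proof
    assume "t = 0"
    then show False
      using sum sum_eq rows(3) g1 g2 by simp
  qed
  have "?leaf (g 0 / t)"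
    using rows(1) g1 \<open>t \<noteq> 0\<close> by (simp add: field_simps)
  moreover have "?leaf (g (m + 3) / t)"
    using rows(2) g1 \<open>t \<noteq> 0\<close> by (simp add: field_simps)
  moreover have "?branch (g 0 / t) (g (m + 3) / t)"
    using rows(3) g1 g2 \<open>t \<noteq> 0\<close> by (simp add: field_simps)
  moreover have "g 0 / t + g (m + 3) / t + S = (\<Sum>i<m + 4. g i) / t"
    using sum_eq \<open>t \<noteq> 0\<close> by (simp add: field_simps)
  then have "?sum (g 0 / t) (g (m + 3) / t)"
    using sum \<open>t \<noteq> 0\<close> by (simp add: S_def)
  ultimately show "\<exists>x y. ?leaf x \<and> ?leaf y \<and> ?branch x y \<and> ?sum x y"
    by blast
next
  assume "\<exists>x y. ?leaf x \<and> ?leaf y \<and> ?branch x y \<and> ?sum x y"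
  then obtain x y where xy: "?leaf x" "?leaf y" "?branch x y" "?sum x y"
    by blast
  define g where "g i = (if i = 0 then x else if i = m + 3 then y else cheb_U (m + 2 - i) k)" for i
  have "D_eigen_eqs m k g"
    unfolding D_eigen_eqs_def
  proof (intro conjI ballI)
    fix i
    assume "i \<in> {2..m + 1}"
    then have "g (i - 1) = cheb_U (Suc (Suc (m + 1 - i))) k" "g i = cheb_U (Suc (m + 1 - i)) k"
      "g (i + 1) = cheb_U (m + 1 - i) k"
      unfolding g_def by (auto simp: Suc_diff_le numeral_eq_Suc)
    then show "g (i - 1) + g (i + 1) = k * g i"
      by simp
  qed (use xy in \<open>simp_all add: g_def numeral_eq_Suc\<close>)
  moreover have "(\<Sum>j<m + 2. g (m + 2 - j)) = (\<Sum>j<m + 2. cheb_U j k)"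
    by (intro sum.cong) (auto simp: g_def)
  then have "(\<Sum>i<m + 4. g i) = x + y + (\<Sum>j<m + 2. cheb_U j k)"
    unfolding sum_lessThan_split_ends by (simp add: g_def)
  ultimately show "main_eigenvalue (D_mat (m + 4)) k"
    unfolding main_eigenvalue_D_iff_eqs using xy(4) by auto
qed

lemma main_eigenvalue_D_nonzero:
  assumes "k \<noteq> 0"
  shows "main_eigenvalue (D_mat (m + 4)) k \<longleftrightarrow> poly (cheb_C (m + 3)) k = 0"
proof -
  define a S where "a = cheb_U (m + 1) k" and "S = (\<Sum>j<m + 2. cheb_U j k)"
  have "k * x = a \<longleftrightarrow> x = a / k" for x
    using assms by (auto simp: field_simps)
  then have main: "main_eigenvalue (D_mat (m + 4)) k \<longleftrightarrow>
      a / k + a / k + cheb_U m k = k * a \<and> a / k + a / k + S \<noteq> 0"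
    unfolding main_eigenvalue_D_iff a_def S_def by auto
  have "poly (cheb_C (m + 3)) k = cheb_U (m + 3) k - a"
    unfolding a_def numeral_3_eq_3 One_nat_def add_Suc_right add_0_right
    by (rule cheb_U_diff[symmetric])
  moreover have "a / k + a / k + cheb_U m k = k * a \<longleftrightarrow> cheb_U (m + 3) k = a"
    using assms by (auto simp: a_def numeral_3_eq_3 field_simps)
  moreover have "cheb_U (m + 3) k = a \<Longrightarrow> a / k + a / k + S \<noteq> 0"
    using cheb_U_sum_nonzero[OF assms, of m] assms unfolding a_def S_def
    by (auto simp: field_simps)
  ultimately show ?thesis
    unfolding main by auto
qed

lemma main_eigenvalue_D_zero: "main_eigenvalue (D_mat (m + 4)) 0 \<longleftrightarrow> m mod 4 = 2"
proof -
  define S where "S = (\<Sum>j<m + 2. cheb_U j 0)"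
  have S: "2 * S = 1 + cheb_U (m + 1) 0 - cheb_U (m + 2) 0"
    using cheb_U_sum[of 0 "m + 1"] by (simp add: S_def)
  have "main_eigenvalue (D_mat (m + 4)) 0 \<longleftrightarrow> cheb_U (m + 1) 0 = 0 \<and> S \<noteq> cheb_U m 0"
  proof
    assume "main_eigenvalue (D_mat (m + 4)) 0"
    then show "cheb_U (m + 1) 0 = 0 \<and> S \<noteq> cheb_U m 0"
      unfolding main_eigenvalue_D_iff S_def[symmetric] by auto
  next
    assume "cheb_U (m + 1) 0 = 0 \<and> S \<noteq> cheb_U m 0"
    then show "main_eigenvalue (D_mat (m + 4)) 0"
      unfolding main_eigenvalue_D_iff S_def[symmetric]
      by (intro exI[of _ "- cheb_U m 0"] exI[of _ 0]) simp
  qed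
  also have "\<dots> \<longleftrightarrow> m mod 4 = 2"
  proof -
    have "odd m \<or> 4 dvd m \<or> m mod 4 = 2"
      by presburger
    then consider "odd m" | "4 dvd m" | "m mod 4 = 2"
      by blast
    then show ?thesis
    proof cases
      case 1
      then have "cheb_U (m + 1) 0 \<noteq> 0" and "m mod 4 \<noteq> 2"
        by (simp_all add: cheb_U_at_0) presburger
      then show ?thesis
        by simp
    next
      case 2
      then have "even m" "\<not> 4 dvd (m + 2)" and "m mod 4 \<noteq> 2"
        by presburger+
      with 2 have "cheb_U (m + 1) 0 = 0" "cheb_U m 0 = 1" "cheb_U (m + 2) 0 = -1"
        by (simp_all add: cheb_U_at_0)
      with S \<open>m mod 4 \<noteq> 2\<close> show ?thesis
        by simp
    next
      case 3
      then have "even m" "\<not> 4 dvd m" "4 dvd (m + 2)"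
        by presburger+
      then have "cheb_U (m + 1) 0 = 0" "cheb_U m 0 = -1" "cheb_U (m + 2) 0 = 1"
        by (simp_all add: cheb_U_at_0)
      with S 3 show ?thesis
        by simp
    qed
  qed
  finally show ?thesis .
qed

lemma main_eigenvalue_D_iff_root:
  "main_eigenvalue (D_mat (m + 4)) k \<longleftrightarrow> poly (cheb_C (m + 3)) k = 0 \<and> (k = 0 \<longrightarrow> m mod 4 = 2)"
proof (cases "k = 0")
  case True
  then show ?thesis
    using main_eigenvalue_D_zero[of m] poly_cheb_C_0_eq_0_iff[of "m + 3"] by auto presburger
next
  case False
  then show ?thesis
    using main_eigenvalue_D_nonzero by simp
qed

theorem corollary1p4:
  fixes n :: nat
  assumes "n \<ge> 4"
  shows "card {k. main_eigenvalue (D_mat n) k} = (if 4 dvd n then n - 2 else n - 1)"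
proof -
  obtain m where n: "n = m + 4"
    using assms by (metis add.commute le_Suc_ex)
  define R where "R = {k. poly (cheb_C (m + 3)) k = 0}"
  have card: "card R = m + 3"
    unfolding R_def by (rule card_cheb_C_roots) simp
  have zero: "0 \<in> R \<longleftrightarrow> even m"
    by (simp add: R_def poly_cheb_C_0_eq_0_iff)
  have "{k. main_eigenvalue (D_mat n) k} = (if 4 dvd m then R - {0} else R)"
    using zero by (auto simp: n R_def main_eigenvalue_D_iff_root) presburger+
  moreover have "4 dvd n \<longleftrightarrow> 4 dvd m"
    unfolding n by presburger
  moreover have "4 dvd m \<Longrightarrow> 0 \<in> R"
    using zero by presburger
  ultimately show ?thesis
    using card card_ge_0_finite[of R] by (simp add: n card_Diff_singleton)
qed

end
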